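(* Let $d\ge1$, $\sigma_1>0$, $\beta>3$, $p_+\in(0,1)$ with $p_-:=1-p_+\ge\frac12$, and let $P_{XY}$ be the distribution with $\mathbb P(Y=+1)=p_+$, $\mathbb P(Y=-1)=p_-$, $X\mid Y=+1\sim\mathcal N(0,\sigma_1^2\mathbf I_d)$, $X\mid Y=-1\sim\mathcal N(0,\beta\sigma_1^2\mathbf I_d)$. Let $k_1,k_2>0$ and define $\psi(x)=k_1\|x\|_2^2+k_2$. Let $(X_1,Y_1),\dots,(X_N,Y_N)$ be training data with labels $Y_i\in\{\pm1\}$ such that $N_+:=\#\{i:Y_i=+1\}\ge1$ and $N_-:=\#\{i:Y_i=-1\}\ge1$, where, given the labels, the $X_i$ are independent with $X_i\sim\mathcal N(0,\sigma_1^2\mathbf I_d)$ if $Y_i=+1$ and $X_i\sim\mathcal N(0,\beta\sigma_1^2\mathbf I_d)$ if $Y_i=-1$. Set $Z_i=\psi(X_i)$, $$b=\frac12\Big(\frac{\sum_{i=1}^N\mathbf 1_{\{Y_i=+1\}}Z_i}{N_+}+\frac{\sum_{i=1}^N\mathbf 1_{\{Y_i=-1\}}Z_i}{N_-}\Big),$$ and $f_{ss}(x)=\mathrm{sign}(-\psi(x)+b)$, with $\mathrm{err}_{f_{ss}}=\mathbb P_{(X,Y)\sim P_{XY}}(f_{ss}(X)\neq Y)$ for $(X,Y)$ independent of the training data. Then for any $\delta\in\big(0,\frac{\beta-1}{\beta+1}\big)$, with probability (over the training data) at least $1-2e^{-N_-d\delta^2/8}-2e^{-N_+d\delta^2/8}$,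 $$\mathrm{err}_{f_{ss}}\le\begin{cases}p_+e^{-d\frac{(\beta-1-(1+\beta)\delta)^2}{32}}+p_-e^{-d\frac{(\beta-1-(1+\beta)\delta)^2}{32\beta^2}}, & \text{if }\delta\in\big[\frac{\beta-3}{\beta+1},\frac{\beta-1}{\beta+1}\big),\\[4pt] p_+e^{-d\frac{\beta-1-(1+\beta)\delta}{16}}+p_-e^{-d\frac{(\beta-1-(1+\beta)\delta)^2}{32\beta^2}}, & \text{if }\delta\in\big(0,\frac{\beta-3}{\beta+1}\big).\end{cases}$$
   Context: $\mathbf I_d$ is the $d\times d$ identity matrix. The map $\psi$ models a representation learned by self-supervision, and $f_{ss}$ is a linear classifier on the feature $Z=\psi(X)$ with intercept $b$ equal to the midpoint of the class-wise feature means on the training data. Ties $\psi(X)=b$ occur with probability zero. *)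

theory Defs
  imports "HOL-Probability.Probability"
begin

text \<open>Isotropic centred Gaussian N(0, s2 I_d) on a Euclidean space of dimension d = DIM('a):
  product of one-dimensional N(0, s2) densities in the coordinates w.r.t. the standard basis.\<close>
definition gauss_iso :: "real \<Rightarrow> 'a::euclidean_space measure" where
  "gauss_iso s2 = density lborel (\<lambda>x. ennreal (\<Prod>u\<in>Basis. normal_density 0 (sqrt s2) (x \<bullet> u)))"

definition psi_feat :: "real \<Rightarrow> real \<Rightarrow> 'a::euclidean_space \<Rightarrow> real" where
  "psi_feat k1 k2 x = k1 * (norm x)^2 + k2"

definition f_ss :: "real \<Rightarrow> real \<Rightarrow> real \<Rightarrow> 'a::euclidean_space \<Rightarrow> real" where
  "f_ss k1 k2 b x = sgn (- psi_feat k1 k2 x + b)"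

text \<open>Test error P_{(X,Y)~P_XY}(f(X) \<noteq> Y) for the mixture P_XY with P(Y=+1)=pp,
  P(Y=-1)=1-pp, X|Y=+1 ~ N(0,s2 I), X|Y=-1 ~ N(0, beta s2 I), written by the law of total
  probability over the label.\<close>
definition err_ss :: "real \<Rightarrow> real \<Rightarrow> real \<Rightarrow> real \<Rightarrow> real \<Rightarrow> real \<Rightarrow> 'a::euclidean_space itself \<Rightarrow> real" where
  "err_ss pp s2 beta k1 k2 b (_ :: 'a itself) =
     pp * measure (gauss_iso s2 :: 'a measure) {x. f_ss k1 k2 b x \<noteq> 1}
   + (1 - pp) * measure (gauss_iso (beta * s2) :: 'a measure) {x. f_ss k1 k2 b x \<noteq> -1}"

definition intercept :: "real \<Rightarrow> real \<Rightarrow> nat \<Rightarrow> (nat \<Rightarrow> real) \<Rightarrow> (nat \<Rightarrow> 'a::euclidean_space) \<Rightarrow> real" where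
  "intercept k1 k2 N Ys Xs =
     (1/2) * ((\<Sum>i\<in>{i. i < N \<and> Ys i = 1}. psi_feat k1 k2 (Xs i)) / card {i. i < N \<and> Ys i = 1}
            + (\<Sum>i\<in>{i. i < N \<and> Ys i = -1}. psi_feat k1 k2 (Xs i)) / card {i. i < N \<and> Ys i = -1})"

definition train_law :: "real \<Rightarrow> real \<Rightarrow> nat \<Rightarrow> (nat \<Rightarrow> real) \<Rightarrow> (nat \<Rightarrow> 'a::euclidean_space) measure" where
  "train_law s2 beta N Ys = PiM {..<N} (\<lambda>i. gauss_iso (if Ys i = 1 then s2 else beta * s2))"

end

theory Submission
  imports Defs
begin

text \<open>Under either class, \<open>\<parallel>X\<parallel>\<^sup>2\<close> divided by the class variance has the chi-square
  moment generating function \<open>(1 - 2c)\<^sup>-\<^sup>d\<^sup>/\<^sup>2\<close>, and so does the sum of such statistics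
  over a class of the training sample with \<open>d\<close> replaced by \<open>N\<^sub>\<plusminus> d\<close>. Chernoff's
  bound turns this into the tails \<open>exp (-n e\<^sup>2/8)\<close> (and \<open>exp (-n e/8)\<close> for \<open>e \<ge> 1\<close>)
  around the mean \<open>n\<close>. Since \<open>b = k\<^sub>2 + k\<^sub>1 \<sigma>\<^sub>1\<^sup>2 t\<close> with \<open>t\<close> the average of the two normalised
  class statistics (the negative one weighted by \<open>\<beta>\<close>), concentration of both statistics
  within \<open>1 \<plusminus> \<delta>\<close> places \<open>t\<close> in \<open>[d(1-\<delta>)(1+\<beta>)/2, d(1+\<delta>)(1+\<beta>)/2]\<close>. For such
  \<open>b\<close> each class error is again a chi-square tail, with relative deviation \<open>g/2\<close> above the
  mean for the positive class and \<open>g/(2\<beta>)\<close> below it for the negative class, where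
  \<open>g = \<beta> - 1 - (1 + \<beta>)\<delta>\<close>.\<close>

lemma normal_density_mult_exp_square:
  fixes s2 c y :: real
  assumes "s2 > 0" "c < 1/2"
  shows "normal_density 0 (sqrt s2) y * exp (c * y^2 / s2)
       = (1 / sqrt (1 - 2 * c)) * normal_density 0 (sqrt (s2 / (1 - 2 * c))) y"
proof -
  have pos: "1 - 2 * c > 0" using assms by simp
  have exponent: "exp (- (y^2) / (2 * s2)) * exp (c * y^2 / s2) = exp (- (y^2) / (2 * (s2 / (1 - 2 * c))))"
    unfolding exp_add[symmetric] using assms pos by (simp add: field_simps)
  have normalisation: "1 / sqrt (2 * pi * s2) = (1 / sqrt (1 - 2 * c)) * (1 / sqrt (2 * pi * (s2 / (1 - 2 * c))))"
    using assms pos by (simp add: real_sqrt_divide real_sqrt_mult field_simps)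
  have "normal_density 0 (sqrt s2) y * exp (c * y^2 / s2)
      = (1 / sqrt (2 * pi * s2)) * (exp (- (y^2) / (2 * s2)) * exp (c * y^2 / s2))"
    unfolding normal_density_def using assms by simp
  also have "\<dots> = (1 / sqrt (1 - 2 * c)) * ((1 / sqrt (2 * pi * (s2 / (1 - 2 * c))))
        * exp (- (y^2) / (2 * (s2 / (1 - 2 * c)))))"
    unfolding exponent normalisation by simp
  also have "\<dots> = (1 / sqrt (1 - 2 * c)) * normal_density 0 (sqrt (s2 / (1 - 2 * c))) y"
    unfolding normal_density_def using assms pos by simp
  finally show ?thesis .
qed

lemma nn_integral_normal_density_exp_square:
  fixes s2 c :: real
  assumes "s2 > 0" "c < 1/2"
  shows "(\<integral>\<^sup>+y. ennreal (normal_density 0 (sqrt s2) y * exp (c * y^2 / s2)) \<partial>lborel)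
       = ennreal ((1 - 2 * c) powr (-1/2))"
proof -
  let ?s = "sqrt (s2 / (1 - 2 * c))"
  have s: "?s > 0" using assms by simp
  have "(\<integral>\<^sup>+y. ennreal (normal_density 0 ?s y) \<partial>lborel) = 1"
    using integrable_normal_density[OF s] integral_normal_density[OF s]
    by (subst nn_integral_eq_integral) auto
  moreover have "(\<integral>\<^sup>+y. ennreal (normal_density 0 (sqrt s2) y * exp (c * y^2 / s2)) \<partial>lborel)
      = ennreal (1 / sqrt (1 - 2 * c)) * (\<integral>\<^sup>+y. ennreal (normal_density 0 ?s y) \<partial>lborel)"
    using assms
    by (subst nn_integral_cmult[symmetric])
       (auto intro!: nn_integral_cong simp: normal_density_mult_exp_square ennreal_mult[symmetric])
  moreover have "1 / sqrt (1 - 2 * c) = (1 - 2 * c) powr (-1/2)"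
    using assms by (simp add: powr_minus_divide powr_half_sqrt)
  ultimately show ?thesis by simp
qed

lemma nn_integral_gauss_iso_exp_norm_square:
  fixes s2 c :: real
  assumes "s2 > 0" "c < 1/2"
  shows "(\<integral>\<^sup>+x. ennreal (exp (c * (norm x)^2 / s2)) \<partial>(gauss_iso s2 :: 'a::euclidean_space measure))
       = ennreal ((1 - 2 * c) powr (- real DIM('a) / 2))"
proof -
  let ?f = "\<lambda>b y. ennreal (normal_density 0 (sqrt s2) y * exp (c * y^2 / s2))"
  have norm_square: "(norm x)^2 = (\<Sum>b\<in>Basis. (x \<bullet> b)^2)" for x :: 'a
    unfolding power2_norm_eq_inner by (subst euclidean_inner) (simp add: power2_eq_square)
  have "(\<integral>\<^sup>+x. ennreal (exp (c * (norm x)^2 / s2)) \<partial>(gauss_iso s2 :: 'a measure))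
      = (\<integral>\<^sup>+x. (\<Prod>b\<in>Basis. ?f b (x \<bullet> b)) \<partial>(lborel :: 'a measure))"
    unfolding gauss_iso_def
    by (subst nn_integral_density)
       (auto intro!: nn_integral_cong simp: norm_square sum_distrib_left sum_divide_distrib
         exp_sum prod_ennreal ennreal_mult[symmetric] prod.distrib[symmetric] prod_nonneg)
  also have "\<dots> = (\<Prod>b\<in>(Basis::'a set). \<integral>\<^sup>+y. ?f b y \<partial>lborel)"
    by (rule nn_integral_lborel_prod) auto
  also have "\<dots> = (\<Prod>b\<in>(Basis::'a set). ennreal ((1 - 2 * c) powr (-1/2)))"
    using nn_integral_normal_density_exp_square[OF assms] by simp
  finally show ?thesis
    using assms by (simp add: ennreal_power powr_power)
qed

lemma prob_space_gauss_iso: "s2 > 0 \<Longrightarrow> prob_space (gauss_iso s2 :: 'a::euclidean_space measure)"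
  using nn_integral_gauss_iso_exp_norm_square[of s2 0, where 'a='a]
  by (intro prob_spaceI) (simp add: gauss_iso_def emeasure_density nn_integral_density)

lemma sets_gauss_iso[simp, measurable_cong]:
  "sets (gauss_iso s2 :: 'a::euclidean_space measure) = sets borel"
  by (simp add: gauss_iso_def)

lemma space_gauss_iso[simp]: "space (gauss_iso s2 :: 'a::euclidean_space measure) = UNIV"
  by (simp add: gauss_iso_def)

lemma ln_one_plus_pos_upper_bound:
  fixes x :: real
  assumes "0 \<le> x" "x \<le> 1"
  shows "ln (1 + x) \<le> x - x^2/4"
proof -
  let ?f = "\<lambda>x::real. x - x^2/4 - ln (1 + x)"
  have "?f 0 \<le> ?f x"
  proof (rule DERIV_nonneg_imp_increasing_open[OF assms(1)])
    fix y :: real assume y: "0 < y" "y < x"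
    have "(?f has_real_derivative (1 - y/2 - 1/(1+y))) (at y)"
      using y by (auto intro!: derivative_eq_intros simp: field_simps)
    moreover have "1 - y/2 - 1/(1+y) = y * (1 - y) / (2 * (1 + y))"
      using y by (simp add: field_simps)
    moreover have "y * (1 - y) / (2 * (1 + y)) \<ge> 0"
      using y assms by (intro divide_nonneg_pos mult_nonneg_nonneg) auto
    ultimately show "\<exists>D. (?f has_real_derivative D) (at y) \<and> 0 \<le> D" by auto
  qed (intro continuous_intros, auto)
  then show ?thesis by simp
qed

lemma ln_one_plus_le_three_quarters:
  fixes x :: real
  assumes "1 \<le> x"
  shows "ln (1 + x) \<le> 3/4 * x"
proof -
  have "ln (1 + x) = ln 2 + ln ((1 + x)/2)" using assms by (simp add: ln_div)
  also have "\<dots> \<le> 25/36 + ((1 + x)/2 - 1)"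
    using ln2_le_25_over_36 ln_le_minus_one[of "(1 + x)/2"] assms by (intro add_mono) auto
  also have "\<dots> \<le> 3/4 * x" using assms by (simp add: field_simps)
  finally show ?thesis .
qed

locale chi_square_mgf_bound = prob_space M for M :: "'a measure" +
  fixes S :: "'a \<Rightarrow> real" and n :: real
  assumes S_measurable[measurable]: "S \<in> borel_measurable M"
    and dof_nonneg: "0 \<le> n"
    and mgf_le: "\<And>c. c < 1/2 \<Longrightarrow>
      (\<integral>\<^sup>+x. ennreal (exp (c * S x)) \<partial>M) \<le> ennreal ((1 - 2 * c) powr (- n / 2))"
begin

lemma upper_tail_le_mgf:
  assumes "0 < s" "s < 1/2"
  shows "prob {x\<in>space M. a \<le> S x} \<le> exp (- s * a) * (1 - 2 * s) powr (- n / 2)"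
proof -
  have "(\<integral>\<^sup>+x. ennreal (exp (s * S x)) * indicator (space M) x \<partial>M) = (\<integral>\<^sup>+x. ennreal (exp (s * S x)) \<partial>M)"
    by (intro nn_integral_cong) simp
  then have "emeasure M {x\<in>space M. S x \<ge> a}
      \<le> ennreal (exp (- s * a)) * (\<integral>\<^sup>+x. ennreal (exp (s * S x)) \<partial>M)"
    using Chernoff_ineq_nn_integral_ge[OF assms(1), of "space M" M S a] by simp
  also have "\<dots> \<le> ennreal (exp (- s * a)) * ennreal ((1 - 2 * s) powr (- n / 2))"
    using mgf_le[of s] assms(2) by (intro mult_left_mono) simp_all
  finally show ?thesis
    by (simp add: emeasure_eq_measure ennreal_mult[symmetric] ennreal_le_iff)
qed

lemma lower_tail_le_mgf:
  assumes "0 < s"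
  shows "prob {x\<in>space M. S x \<le> a} \<le> exp (s * a) * (1 + 2 * s) powr (- n / 2)"
proof -
  have "(\<integral>\<^sup>+x. ennreal (exp (- s * S x)) * indicator (space M) x \<partial>M) = (\<integral>\<^sup>+x. ennreal (exp (- s * S x)) \<partial>M)"
    by (intro nn_integral_cong) simp
  then have "emeasure M {x\<in>space M. S x \<le> a}
      \<le> ennreal (exp (s * a)) * (\<integral>\<^sup>+x. ennreal (exp (- s * S x)) \<partial>M)"
    using Chernoff_ineq_nn_integral_le[OF assms(1), of "space M" M S a] by simp
  also have "\<dots> \<le> ennreal (exp (s * a)) * ennreal ((1 + 2 * s) powr (- n / 2))"
    using mgf_le[of "- s"] assms by (intro mult_left_mono) simp_all
  finally show ?thesis
    by (simp add: emeasure_eq_measure ennreal_mult[symmetric] ennreal_le_iff)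
qed

lemma upper_tail:
  assumes "0 < e"
  shows "prob {x\<in>space M. n * (1 + e) \<le> S x} \<le> exp (- n * (e - ln (1 + e)) / 2)"
proof -
  define s where "s = e / (2 * (1 + e))"
  have s: "0 < s" "s < 1/2" using assms by (simp_all add: s_def field_simps)
  have "- s * (n * (1 + e)) = - n * e / 2" using assms by (simp add: s_def field_simps)
  moreover have "(1 - 2 * s) powr (- n / 2) = exp (n * ln (1 + e) / 2)"
  proof -
    have "1 - 2 * s = inverse (1 + e)" using assms by (simp add: s_def field_simps)
    then show ?thesis using assms by (simp add: powr_def ln_inverse)
  qed
  ultimately have "exp (- s * (n * (1 + e))) * (1 - 2 * s) powr (- n / 2)
      = exp (- n * e / 2) * exp (n * ln (1 + e) / 2)"
    by simp
  also have "\<dots> = exp (- n * (e - ln (1 + e)) / 2)"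
    by (simp add: exp_add[symmetric] field_simps)
  finally show ?thesis using upper_tail_le_mgf[OF s] by metis
qed

lemma upper_tail_small:
  assumes "0 < e" "e \<le> 1"
  shows "prob {x\<in>space M. n * (1 + e) \<le> S x} \<le> exp (- n * e^2 / 8)"
proof -
  have "n * ln (1 + e) \<le> n * (e - e^2/4)"
    using ln_one_plus_pos_upper_bound[of e] assms dof_nonneg by (intro mult_left_mono) auto
  then have "exp (- n * (e - ln (1 + e)) / 2) \<le> exp (- n * e^2 / 8)"
    by (simp add: algebra_simps)
  then show ?thesis using upper_tail[OF assms(1)] by linarith
qed

lemma upper_tail_large:
  assumes "1 \<le> e"
  shows "prob {x\<in>space M. n * (1 + e) \<le> S x} \<le> exp (- n * e / 8)"
proof -
  have "n * ln (1 + e) \<le> n * (3/4 * e)"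
    using ln_one_plus_le_three_quarters[OF assms] dof_nonneg by (intro mult_left_mono) auto
  then have "exp (- n * (e - ln (1 + e)) / 2) \<le> exp (- n * e / 8)"
    by (simp add: algebra_simps)
  then show ?thesis using upper_tail[of e] assms by linarith
qed

lemma lower_tail:
  assumes "0 < e" "e \<le> 1"
  shows "prob {x\<in>space M. S x \<le> n * (1 - e)} \<le> exp (- n * e^2 / 8)"
proof -
  have "n * (e/2 - (e/2)^2) \<le> n * ln (1 + e/2)"
    using ln_one_plus_pos_lower_bound[of "e/2"] assms dof_nonneg by (intro mult_left_mono) auto
  have "e/4 * (n * (1 - e)) + (- n / 2) * ln (1 + 2 * (e/4))
      = (n * (e/2 - (e/2)^2) - n * ln (1 + e/2)) / 2 - n * e^2 / 8"
    by (simp add: field_simps power2_eq_square)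
  also have "\<dots> \<le> - n * e^2 / 8"
    using \<open>n * (e/2 - (e/2)^2) \<le> n * ln (1 + e/2)\<close> by simp
  finally have "exp (e/4 * (n * (1 - e))) * (1 + 2 * (e/4)) powr (- n / 2) \<le> exp (- n * e^2 / 8)"
    using assms by (simp add: powr_def exp_add[symmetric])
  then show ?thesis using lower_tail_le_mgf[of "e/4" "n * (1 - e)"] assms by simp
qed

lemma two_sided_tail:
  assumes "0 < e" "e \<le> 1"
  shows "prob {x\<in>space M. S x \<le> n * (1 - e) \<or> n * (1 + e) \<le> S x} \<le> 2 * exp (- n * e^2 / 8)"
proof -
  have "{x\<in>space M. S x \<le> n * (1 - e) \<or> n * (1 + e) \<le> S x}
      = {x\<in>space M. S x \<le> n * (1 - e)} \<union> {x\<in>space M. n * (1 + e) \<le> S x}" by auto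
  then have "prob {x\<in>space M. S x \<le> n * (1 - e) \<or> n * (1 + e) \<le> S x}
      \<le> prob {x\<in>space M. S x \<le> n * (1 - e)} + prob {x\<in>space M. n * (1 + e) \<le> S x}"
    by (simp add: measure_Un_le)
  then show ?thesis using lower_tail[OF assms] upper_tail_small[OF assms] by linarith
qed

end

lemma chi_square_mgf_bound_gauss_iso:
  assumes "s2 > 0"
  shows "chi_square_mgf_bound (gauss_iso s2 :: 'a::euclidean_space measure)
           (\<lambda>x. (norm x)^2 / s2) (real DIM('a))"
proof (intro chi_square_mgf_bound.intro chi_square_mgf_bound_axioms.intro)
  show "prob_space (gauss_iso s2 :: 'a measure)" using assms by (rule prob_space_gauss_iso)
  show "(\<lambda>x. (norm x)^2 / s2) \<in> borel_measurable (gauss_iso s2 :: 'a measure)" by measurable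
  show "\<And>c. c < 1/2 \<Longrightarrow> (\<integral>\<^sup>+x. ennreal (exp (c * ((norm x)^2 / s2))) \<partial>(gauss_iso s2 :: 'a measure))
      \<le> ennreal ((1 - 2 * c) powr (- real DIM('a) / 2))"
    using nn_integral_gauss_iso_exp_norm_square[OF assms, where 'a='a] by simp
qed simp

lemma nn_integral_PiM_exp_sum:
  fixes M :: "'i \<Rightarrow> 'a measure" and f :: "'i \<Rightarrow> 'a \<Rightarrow> real"
  assumes M: "\<And>i. prob_space (M i)" and J: "finite J" "I \<subseteq> J"
    and f: "\<And>i. i \<in> I \<Longrightarrow> f i \<in> borel_measurable (M i)"
  shows "(\<integral>\<^sup>+X. ennreal (exp (\<Sum>i\<in>I. f i (X i))) \<partial>PiM J M)
       = (\<Prod>i\<in>I. \<integral>\<^sup>+x. ennreal (exp (f i x)) \<partial>M i)"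
proof -
  interpret product_sigma_finite M
    unfolding product_sigma_finite_def using M prob_space_imp_sigma_finite by blast
  have I: "finite I" using J finite_subset by blast
  let ?F = "\<lambda>i x. if i \<in> I then ennreal (exp (f i x)) else 1"
  have F: "?F i \<in> borel_measurable (M i)" for i
    using f[of i] by (cases "i \<in> I") simp_all
  have "(\<integral>\<^sup>+X. ennreal (exp (\<Sum>i\<in>I. f i (X i))) \<partial>PiM J M)
      = (\<integral>\<^sup>+X. (\<Prod>i\<in>J. ?F i (X i)) \<partial>PiM J M)"
  proof (intro nn_integral_cong)
    fix X :: "'i \<Rightarrow> 'a"
    have "(\<Prod>i\<in>J. ?F i (X i)) = (\<Prod>i\<in>I. ennreal (exp (f i (X i))))"
      using J by (intro prod.mono_neutral_cong_right) auto
    then show "ennreal (exp (\<Sum>i\<in>I. f i (X i))) = (\<Prod>i\<in>J. ?F i (X i))"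
      using I by (simp add: prod_ennreal exp_sum)
  qed
  also have "\<dots> = (\<Prod>i\<in>J. \<integral>\<^sup>+x. ?F i x \<partial>M i)"
    using J F by (intro product_nn_integral_prod) auto
  also have "\<dots> = (\<Prod>i\<in>I. \<integral>\<^sup>+x. ennreal (exp (f i x)) \<partial>M i)"
    using J M by (intro prod.mono_neutral_cong_right) (auto simp: prob_space.emeasure_space_1)
  finally show ?thesis .
qed

lemma chi_square_mgf_bound_PiM_sum:
  fixes M :: "'i \<Rightarrow> 'a measure"
  assumes M: "\<And>i. prob_space (M i)" and J: "finite J" "I \<subseteq> J"
    and S: "\<And>i. i \<in> I \<Longrightarrow> chi_square_mgf_bound (M i) (S i) (n i)"
  shows "chi_square_mgf_bound (PiM J M) (\<lambda>X. \<Sum>i\<in>I. S i (X i)) (\<Sum>i\<in>I. n i)"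
proof (intro chi_square_mgf_bound.intro chi_square_mgf_bound_axioms.intro)
  note S_measurable = chi_square_mgf_bound.S_measurable[OF S]
  show "prob_space (PiM J M)" using M by (rule prob_space_PiM)
  show "(\<lambda>X. \<Sum>i\<in>I. S i (X i)) \<in> borel_measurable (PiM J M)"
    using J S_measurable
    by (intro borel_measurable_sum measurable_compose[OF measurable_component_singleton]) auto
  show "0 \<le> (\<Sum>i\<in>I. n i)" using chi_square_mgf_bound.dof_nonneg[OF S] by (simp add: sum_nonneg)
  fix c :: real assume c: "c < 1/2"
  have "(\<integral>\<^sup>+X. ennreal (exp (c * (\<Sum>i\<in>I. S i (X i)))) \<partial>PiM J M)
      = (\<Prod>i\<in>I. \<integral>\<^sup>+x. ennreal (exp (c * S i x)) \<partial>M i)"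
    unfolding sum_distrib_left using M J S_measurable by (intro nn_integral_PiM_exp_sum) auto
  also have "\<dots> \<le> (\<Prod>i\<in>I. ennreal ((1 - 2 * c) powr (- n i / 2)))"
    using chi_square_mgf_bound.mgf_le[OF S c] by (intro prod_mono_ennreal)
  also have "\<dots> = ennreal ((1 - 2 * c) powr (\<Sum>i\<in>I. - n i / 2))"
    using c by (subst powr_sum) (auto simp: prod_ennreal)
  also have "(\<Sum>i\<in>I. - n i / 2) = - (\<Sum>i\<in>I. n i) / 2"
    by (simp add: sum_negf sum_divide_distrib)
  finally show "(\<integral>\<^sup>+X. ennreal (exp (c * (\<Sum>i\<in>I. S i (X i)))) \<partial>PiM J M)
      \<le> ennreal ((1 - 2 * c) powr (- (\<Sum>i\<in>I. n i) / 2))" .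
qed

definition chi_sq_stat :: "real \<Rightarrow> nat set \<Rightarrow> (nat \<Rightarrow> 'a::euclidean_space) \<Rightarrow> real" where
  "chi_sq_stat v I Xs = (\<Sum>i\<in>I. (norm (Xs i))^2 / v)"

lemma chi_square_mgf_bound_train_law:
  assumes "s2 > 0" "beta > 0" "I \<subseteq> {..<N}"
    and v: "\<And>i. i \<in> I \<Longrightarrow> (if Ys i = 1 then s2 else beta * s2) = v"
  shows "chi_square_mgf_bound (train_law s2 beta N Ys :: (nat \<Rightarrow> 'a::euclidean_space) measure)
           (chi_sq_stat v I) (real (card I) * real DIM('a))"
proof -
  have "chi_square_mgf_bound (train_law s2 beta N Ys :: (nat \<Rightarrow> 'a) measure)
      (\<lambda>X. \<Sum>i\<in>I. (norm (X i))^2 / v) (\<Sum>i\<in>I. real DIM('a))"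
    unfolding train_law_def
  proof (rule chi_square_mgf_bound_PiM_sum)
    fix i assume "i \<in> I"
    then have "0 < v" using v[of i] assms(1,2) by (smt (verit) mult_pos_pos)
    show "chi_square_mgf_bound (gauss_iso (if Ys i = 1 then s2 else beta * s2) :: 'a measure)
        (\<lambda>x. (norm x)^2 / v) (real DIM('a))"
      using chi_square_mgf_bound_gauss_iso[OF \<open>0 < v\<close>] v[OF \<open>i \<in> I\<close>] by simp
  qed (use assms in \<open>auto intro!: prob_space_gauss_iso\<close>)
  then show ?thesis by (simp add: chi_sq_stat_def[abs_def])
qed

lemma f_ss_ne_one_iff: "f_ss k1 k2 b x \<noteq> 1 \<longleftrightarrow> b \<le> psi_feat k1 k2 x"
  by (auto simp: f_ss_def sgn_if)

lemma f_ss_ne_minus_one_iff: "f_ss k1 k2 b x \<noteq> -1 \<longleftrightarrow> psi_feat k1 k2 x \<le> b"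
  by (auto simp: f_ss_def sgn_if)

lemma err_ss_eq:
  "err_ss pp s2 beta k1 k2 b TYPE('a::euclidean_space)
     = pp * measure (gauss_iso s2 :: 'a measure) {x. b \<le> psi_feat k1 k2 x}
     + (1 - pp) * measure (gauss_iso (beta * s2) :: 'a measure) {x. psi_feat k1 k2 x \<le> b}"
  by (simp add: err_ss_def f_ss_ne_one_iff f_ss_ne_minus_one_iff)

lemma borel_measurable_psi_feat[measurable]: "psi_feat k1 k2 \<in> borel_measurable borel"
  unfolding psi_feat_def[abs_def] by measurable

lemma psi_feat_ge_iff:
  assumes "k1 > 0" "v > 0"
  shows "k2 + k1 * v * t \<le> psi_feat k1 k2 x \<longleftrightarrow> t \<le> (norm x)^2 / v"
  using assms by (simp add: psi_feat_def pos_le_divide_eq ac_simps)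

lemma psi_feat_le_iff:
  assumes "k1 > 0" "v > 0"
  shows "psi_feat k1 k2 x \<le> k2 + k1 * v * t \<longleftrightarrow> (norm x)^2 / v \<le> t"
  using assms by (simp add: psi_feat_def pos_divide_le_eq ac_simps)

lemma borel_measurable_err_ss:
  assumes "s2 > 0" "beta > 0"
  shows "(\<lambda>b. err_ss pp s2 beta k1 k2 b TYPE('a::euclidean_space)) \<in> borel_measurable borel"
proof -
  interpret P: prob_space "gauss_iso s2 :: 'a measure"
    using assms by (intro prob_space_gauss_iso) simp
  interpret N: prob_space "gauss_iso (beta * s2) :: 'a measure"
    using assms by (intro prob_space_gauss_iso) simp
  let ?pos = "\<lambda>b. P.prob {x. b \<le> psi_feat k1 k2 x}"
  let ?neg = "\<lambda>b. N.prob {x. psi_feat k1 k2 x \<le> b}"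
  have "mono (\<lambda>b. - ?pos b)"
  proof (rule monoI)
    fix a b :: real assume "a \<le> b"
    then show "- ?pos a \<le> - ?pos b" by (simp add: P.finite_measure_mono subset_eq)
  qed
  moreover have "mono ?neg"
  proof (rule monoI)
    fix a b :: real assume "a \<le> b"
    then show "?neg a \<le> ?neg b" by (simp add: N.finite_measure_mono subset_eq)
  qed
  ultimately have "(\<lambda>b. - ?pos b) \<in> borel_measurable borel" "?neg \<in> borel_measurable borel"
    by (simp_all add: borel_measurable_mono)
  then show ?thesis unfolding err_ss_eq by simp
qed

lemma pos_class_error_le:
  fixes t g :: real
  assumes "s2 > 0" "k1 > 0" "0 < g" "real DIM('a) * (1 + g/2) \<le> t"
  shows "measure (gauss_iso s2 :: 'a::euclidean_space measure) {x. k2 + k1 * s2 * t \<le> psi_feat k1 k2 x}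
    \<le> (if g \<le> 2 then exp (- real DIM('a) * g^2 / 32) else exp (- real DIM('a) * g / 16))"
proof -
  interpret chi_square_mgf_bound "gauss_iso s2 :: 'a measure" "\<lambda>x. (norm x)^2 / s2" "real DIM('a)"
    using assms(1) by (rule chi_square_mgf_bound_gauss_iso)
  have "{x. k2 + k1 * s2 * t \<le> psi_feat k1 k2 x} \<subseteq> {x. real DIM('a) * (1 + g/2) \<le> (norm x)^2 / s2}"
    using assms by (auto simp: psi_feat_ge_iff)
  then have "prob {x. k2 + k1 * s2 * t \<le> psi_feat k1 k2 x} \<le> prob {x. real DIM('a) * (1 + g/2) \<le> (norm x)^2 / s2}"
    by (rule finite_measure_mono) measurable
  also have "\<dots> \<le> (if g \<le> 2 then exp (- real DIM('a) * g^2 / 32) else exp (- real DIM('a) * g / 16))"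
    using upper_tail_small[of "g/2"] upper_tail_large[of "g/2"] assms(3)
    by (auto simp: power_divide)
  finally show ?thesis .
qed

lemma neg_class_error_le:
  fixes t g :: real
  assumes "s2 > 0" "beta > 0" "k1 > 0" "0 < g" "g \<le> 2 * beta"
    and "t \<le> beta * real DIM('a) * (1 - g / (2 * beta))"
  shows "measure (gauss_iso (beta * s2) :: 'a::euclidean_space measure) {x. psi_feat k1 k2 x \<le> k2 + k1 * s2 * t}
    \<le> exp (- real DIM('a) * g^2 / (32 * beta^2))"
proof -
  interpret chi_square_mgf_bound "gauss_iso (beta * s2) :: 'a measure" "\<lambda>x. (norm x)^2 / (beta * s2)" "real DIM('a)"
    using assms by (intro chi_square_mgf_bound_gauss_iso) simp
  have bs2: "beta * s2 > 0" using assms by simp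
  have bs2: "beta * s2 > 0" using assms by simp
  have "(norm x)^2 / (beta * s2) \<le> t / beta" if "psi_feat k1 k2 x \<le> k2 + k1 * s2 * t" for x
  proof -
    have "k2 + k1 * s2 * t = k2 + k1 * (beta * s2) * (t / beta)" using assms by simp
    then show ?thesis using that psi_feat_le_iff[OF assms(3) bs2] by metis
  qed
  moreover have "t / beta \<le> real DIM('a) * (1 - g / (2 * beta))"
    using assms by (simp add: pos_divide_le_eq ac_simps)
  ultimately have "{x. psi_feat k1 k2 x \<le> k2 + k1 * s2 * t}
      \<subseteq> {x. (norm x)^2 / (beta * s2) \<le> real DIM('a) * (1 - g / (2 * beta))}"
    by force
  then have "prob {x. psi_feat k1 k2 x \<le> k2 + k1 * s2 * t}
      \<le> prob {x. (norm x)^2 / (beta * s2) \<le> real DIM('a) * (1 - g / (2 * beta))}"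
    by (rule finite_measure_mono) measurable
  also have "\<dots> \<le> exp (- real DIM('a) * (g / (2 * beta))^2 / 8)"
    using lower_tail[of "g / (2 * beta)"] assms by simp
  also have "\<dots> = exp (- real DIM('a) * g^2 / (32 * beta^2))"
    by (simp add: power_divide power_mult_distrib)
  finally show ?thesis .
qed

definition ss_err_bound :: "real \<Rightarrow> real \<Rightarrow> real \<Rightarrow> real \<Rightarrow> real" where
  "ss_err_bound d beta pp delta =
    (let g = beta - 1 - (1 + beta) * delta
     in if (beta - 3) / (beta + 1) \<le> delta
        then pp * exp (- d * g^2 / 32) + (1 - pp) * exp (- d * g^2 / (32 * beta^2))
        else pp * exp (- d * g / 16) + (1 - pp) * exp (- d * g^2 / (32 * beta^2)))"

lemma err_ss_le_ss_err_bound: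
  fixes t :: real
  assumes "s2 > 0" "beta > 3" "0 \<le> pp" "pp \<le> 1" "k1 > 0"
    and "0 < delta" "delta < (beta - 1) / (beta + 1)"
    and "real DIM('a) * (1 - delta) * (1 + beta) / 2 \<le> t"
    and "t \<le> real DIM('a) * (1 + delta) * (1 + beta) / 2"
  shows "err_ss pp s2 beta k1 k2 (k2 + k1 * s2 * t) TYPE('a::euclidean_space)
    \<le> ss_err_bound DIM('a) beta pp delta"
proof -
  define g where "g = beta - 1 - (1 + beta) * delta"
  have "0 < g" using assms unfolding g_def by (simp add: field_simps)
  have "g \<le> 2 * beta" using assms unfolding g_def by (simp add: algebra_simps)
  have g_le_2: "g \<le> 2 \<longleftrightarrow> (beta - 3) / (beta + 1) \<le> delta"
    using assms unfolding g_def by (simp add: divide_le_eq field_simps)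
  have "real DIM('a) * (1 + g/2) \<le> t" using assms(8) unfolding g_def by (simp add: field_simps)
  then have pos: "measure (gauss_iso s2 :: 'a measure) {x. k2 + k1 * s2 * t \<le> psi_feat k1 k2 x}
    \<le> (if g \<le> 2 then exp (- real DIM('a) * g^2 / 32) else exp (- real DIM('a) * g / 16))"
    using pos_class_error_le assms \<open>0 < g\<close> by blast
  have "beta * real DIM('a) * (1 - g / (2 * beta)) = real DIM('a) * (1 + delta) * (1 + beta) / 2"
    using assms(2) unfolding g_def by (simp add: field_simps)
  then have "t \<le> beta * real DIM('a) * (1 - g / (2 * beta))" using assms(9) by (simp only:)
  then have neg: "measure (gauss_iso (beta * s2) :: 'a measure) {x. psi_feat k1 k2 x \<le> k2 + k1 * s2 * t}
    \<le> exp (- real DIM('a) * g^2 / (32 * beta^2))"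
    using neg_class_error_le assms \<open>0 < g\<close> \<open>g \<le> 2 * beta\<close> by simp
  show ?thesis
    unfolding err_ss_eq ss_err_bound_def Let_def g_def[symmetric] g_le_2[symmetric]
    using pos neg assms(3,4) by (cases "g \<le> 2") (auto intro!: add_mono mult_left_mono)
qed

lemma sum_psi_feat_eq_chi_sq_stat:
  fixes k1 k2 v :: real
  assumes "v \<noteq> 0"
  shows "(\<Sum>i\<in>I. psi_feat k1 k2 (Xs i)) = k1 * v * chi_sq_stat v I Xs + card I * k2"
  using assms by (simp add: psi_feat_def chi_sq_stat_def sum.distrib sum_distrib_left)

lemma intercept_eq_chi_sq_stat:
  assumes "s2 > 0" "beta > 0"
    and "card {i. i < N \<and> Ys i = 1} \<ge> 1" "card {i. i < N \<and> Ys i = -1} \<ge> 1"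
  shows "intercept k1 k2 N Ys Xs = k2 + k1 * s2 *
    (chi_sq_stat s2 {i. i < N \<and> Ys i = 1} Xs / card {i. i < N \<and> Ys i = 1}
     + beta * (chi_sq_stat (beta * s2) {i. i < N \<and> Ys i = -1} Xs / card {i. i < N \<and> Ys i = -1})) / 2"
proof -
  let ?Ip = "{i. i < N \<and> Ys i = 1}" and ?Im = "{i. i < N \<and> Ys i = -1}"
  have "(\<Sum>i\<in>?Ip. psi_feat k1 k2 (Xs i)) = k1 * s2 * chi_sq_stat s2 ?Ip Xs + card ?Ip * k2"
    "(\<Sum>i\<in>?Im. psi_feat k1 k2 (Xs i)) = k1 * (beta * s2) * chi_sq_stat (beta * s2) ?Im Xs + card ?Im * k2"
    using assms by (auto intro!: sum_psi_feat_eq_chi_sq_stat)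
  moreover have "card ?Ip \<noteq> 0" "card ?Im \<noteq> 0" using assms(3,4) by linarith+
  ultimately show ?thesis
    unfolding intercept_def by (simp add: field_simps)
qed

lemma err_ss_intercept_le_ss_err_bound:
  fixes Xs :: "nat \<Rightarrow> 'a::euclidean_space"
  assumes "s2 > 0" "beta > 3" "0 \<le> pp" "pp \<le> 1" "k1 > 0"
    and "0 < delta" "delta < (beta - 1) / (beta + 1)"
    and "card {i. i < N \<and> Ys i = 1} \<ge> 1" "card {i. i < N \<and> Ys i = -1} \<ge> 1"
    and "card {i. i < N \<and> Ys i = 1} * real DIM('a) * (1 - delta) < chi_sq_stat s2 {i. i < N \<and> Ys i = 1} Xs"
    and "chi_sq_stat s2 {i. i < N \<and> Ys i = 1} Xs < card {i. i < N \<and> Ys i = 1} * real DIM('a) * (1 + delta)"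
    and "card {i. i < N \<and> Ys i = -1} * real DIM('a) * (1 - delta) < chi_sq_stat (beta * s2) {i. i < N \<and> Ys i = -1} Xs"
    and "chi_sq_stat (beta * s2) {i. i < N \<and> Ys i = -1} Xs < card {i. i < N \<and> Ys i = -1} * real DIM('a) * (1 + delta)"
  shows "err_ss pp s2 beta k1 k2 (intercept k1 k2 N Ys Xs) TYPE('a) \<le> ss_err_bound DIM('a) beta pp delta"
proof -
  define np where "np = real (card {i. i < N \<and> Ys i = 1})"
  define nm where "nm = real (card {i. i < N \<and> Ys i = -1})"
  define Ap where "Ap = chi_sq_stat s2 {i. i < N \<and> Ys i = 1} Xs / np"
  define Am where "Am = chi_sq_stat (beta * s2) {i. i < N \<and> Ys i = -1} Xs / nm"
  have "np > 0" "nm > 0" using assms(8,9) by (simp_all add: np_def nm_def)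
  then have Ap: "DIM('a) * (1 - delta) < Ap" "Ap < DIM('a) * (1 + delta)"
    and Am: "DIM('a) * (1 - delta) < Am" "Am < DIM('a) * (1 + delta)"
    using assms(10-13) unfolding np_def[symmetric] nm_def[symmetric]
    by (simp_all add: Ap_def Am_def field_simps)
  have "beta * (DIM('a) * (1 - delta)) < beta * Am" "beta * Am < beta * (DIM('a) * (1 + delta))"
    using Am assms(2) by simp_all
  then have t_lo: "DIM('a) * (1 - delta) * (1 + beta) / 2 \<le> (Ap + beta * Am) / 2"
    and t_hi: "(Ap + beta * Am) / 2 \<le> DIM('a) * (1 + delta) * (1 + beta) / 2"
    using Ap by (simp_all add: algebra_simps)
  have "beta > 0" using assms(2) by simp
  then have "intercept k1 k2 N Ys Xs = k2 + k1 * s2 * ((Ap + beta * Am) / 2)"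
    unfolding intercept_eq_chi_sq_stat[OF assms(1) \<open>beta > 0\<close> assms(8,9)]
    by (simp add: Ap_def Am_def np_def nm_def)
  then show ?thesis
    using err_ss_le_ss_err_bound[OF assms(1-7) t_lo t_hi] by simp
qed

lemma borel_measurable_intercept:
  "(\<lambda>Xs. intercept k1 k2 N Ys Xs)
     \<in> borel_measurable (train_law s2 beta N Ys :: (nat \<Rightarrow> 'a::euclidean_space) measure)"
proof -
  have "(\<lambda>Xs. psi_feat k1 k2 (Xs i)) \<in> borel_measurable (train_law s2 beta N Ys :: (nat \<Rightarrow> 'a) measure)"
    if "i < N" for i
    unfolding train_law_def
    by (rule measurable_compose[OF measurable_component_singleton]) (use that in simp, measurable)
  then show ?thesis
    unfolding intercept_def by (intro borel_measurable_times borel_measurable_add borel_measurable_divide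
      borel_measurable_const borel_measurable_sum) auto
qed

lemma (in prob_space) prob_ge_one_minus_exceptions:
  assumes "A \<in> events" "B \<in> events" "C \<in> events" "space M - B - C \<subseteq> A"
  shows "1 - prob B - prob C \<le> prob A"
proof -
  have "prob (space M - A) \<le> prob (B \<union> C)"
    using assms by (intro finite_measure_mono) auto
  also have "\<dots> \<le> prob B + prob C"
    using assms by (intro measure_Un_le) auto
  finally show ?thesis using prob_compl[OF assms(1)] by linarith
qed

theorem theorem3:
  fixes s1 beta pp k1 k2 delta :: real and N :: nat and Ys :: "nat \<Rightarrow> real"
    and TYPE_a :: "'a::euclidean_space itself"
  assumes "s1 > 0" and "beta > 3"
    and "0 < pp" and "pp < 1" and "1 - pp \<ge> 1/2"
    and "k1 > 0" and "k2 > 0"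
    and "\<forall>i<N. Ys i = 1 \<or> Ys i = -1"
    and "card {i. i < N \<and> Ys i = 1} \<ge> 1" and "card {i. i < N \<and> Ys i = -1} \<ge> 1"
    and "0 < delta" and "delta < (beta - 1) / (beta + 1)"
  shows
    "let d = real DIM('a); Np = real (card {i. i < N \<and> Ys i = 1});
         Nm = real (card {i. i < N \<and> Ys i = -1});
         M = (train_law (s1^2) beta N Ys :: (nat \<Rightarrow> 'a) measure);
         g = beta - 1 - (1 + beta) * delta;
         bound = (if (beta - 3) / (beta + 1) \<le> delta
                  then pp * exp (- d * g^2 / 32) + (1 - pp) * exp (- d * g^2 / (32 * beta^2))
                  else pp * exp (- d * g / 16) + (1 - pp) * exp (- d * g^2 / (32 * beta^2)))
     in measure M {Xs \<in> space M.
           err_ss pp (s1^2) beta k1 k2 (intercept k1 k2 N Ys Xs) TYPE('a) \<le> bound}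
        \<ge> 1 - 2 * exp (- Nm * d * delta^2 / 8) - 2 * exp (- Np * d * delta^2 / 8)"
proof -
  let ?d = "real DIM('a)"
  let ?Ip = "{i. i < N \<and> Ys i = 1}" and ?Im = "{i. i < N \<and> Ys i = -1}"
  let ?M = "train_law (s1^2) beta N Ys :: (nat \<Rightarrow> 'a) measure"
  let ?Sp = "chi_sq_stat (s1^2) ?Ip" and ?Sm = "chi_sq_stat (beta * s1^2) ?Im"
  have s2: "s1^2 > 0" using assms(1) by simp
  interpret P: chi_square_mgf_bound ?M ?Sp "card ?Ip * ?d"
    using s2 assms(2) by (intro chi_square_mgf_bound_train_law) auto
  interpret Q: chi_square_mgf_bound ?M ?Sm "card ?Im * ?d"
    using s2 assms(2) by (intro chi_square_mgf_bound_train_law) auto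
  define Bp where "Bp = {Xs \<in> space ?M. ?Sp Xs \<le> card ?Ip * ?d * (1 - delta) \<or> card ?Ip * ?d * (1 + delta) \<le> ?Sp Xs}"
  define Bm where "Bm = {Xs \<in> space ?M. ?Sm Xs \<le> card ?Im * ?d * (1 - delta) \<or> card ?Im * ?d * (1 + delta) \<le> ?Sm Xs}"
  define E where "E = {Xs \<in> space ?M. err_ss pp (s1^2) beta k1 k2 (intercept k1 k2 N Ys Xs) TYPE('a) \<le> ss_err_bound ?d beta pp delta}"
  have "(\<lambda>Xs. err_ss pp (s1^2) beta k1 k2 (intercept k1 k2 N Ys Xs) TYPE('a)) \<in> borel_measurable ?M"
    using s2 assms(2) by (intro measurable_compose[OF borel_measurable_intercept borel_measurable_err_ss]) auto
  then have "E \<in> P.events" "Bp \<in> P.events" "Bm \<in> P.events" unfolding E_def Bp_def Bm_def by measurable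
  moreover have "space ?M - Bp - Bm \<subseteq> E"
    using err_ss_intercept_le_ss_err_bound[OF s2, of beta pp k1 delta N Ys] assms
    by (auto simp: Bp_def Bm_def E_def not_le)
  ultimately have "1 - P.prob Bp - P.prob Bm \<le> P.prob E" by (intro P.prob_ge_one_minus_exceptions)
  moreover have "(beta - 1) / (beta + 1) < 1" using assms(2) by simp
  then have "P.prob Bp \<le> 2 * exp (- (card ?Ip * ?d) * delta^2 / 8)"
    "P.prob Bm \<le> 2 * exp (- (card ?Im * ?d) * delta^2 / 8)"
    unfolding Bp_def Bm_def using P.two_sided_tail Q.two_sided_tail assms(11,12) by simp_all
  ultimately show ?thesis unfolding Let_def E_def ss_err_bound_def by simp
qed

end
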